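(* Let $|V\rangle$ be a KP tau-function in the big cell and $l_z$ a lifting operator for $|V\rangle$. Then $\langle0|\hat l=\langle0|\psi^*_{\frac12}\psi_{-\frac12}$.
   Context: Charged fermions $\psi_k,\psi_k^*$ ($k\in\mathbb{Z}+\frac12$) with $[\psi_i,\psi^*_j]_+=\delta_{ij}$, other anticommutators zero; dual vacuum $\langle0|$ with $\langle0|\psi_k=\langle0|\psi^*_{-k}=0$ for $k>0$; vacuum expectation $\langle0|\cdot|0\rangle$; normal ordering $:\!ab\!:\,=ab-\langle0|ab|0\rangle$; fields $\psi(z)=\sum z^{k-\frac12}\psi_k$, $\psi^*(z)=\sum z^{-k-\frac12}\psi^*_k$. For $a\in w_{1+\infty}=\mathrm{span}\{z^i\partial_z^j\}$, $\hat a=\mathrm{Res}_z\big(:\!\psi^*(z)\,(a\cdot\psi(z))\!:\big)$. $|V\rangle$ in the big cell means $|V\rangle=c\cdot\varphi_0\wedge\varphi_1\wedge\cdots$ ($c\ne0$) in the semi-infinite wedge space of $z^{1/2}\mathbb{C}[z,z^{-1}]]$, with admissible basis $\varphi_k=z^{k+\frac12}+\sum_{i\ge1-k}a_{k,i}z^{-i+\frac12}$. A lifting operator is $l_z\in w_{1+\infty}$ (graded by $\deg z=1,\deg\partial_z=-1$) such that for some admissible basis and constants $a_k$, $(z^{\frac12}l_zz^{-\frac12})^k\varphi_0=a_k\varphi_k$ for all $k\ge1$, and the degree-one part $\sum_{k\ge0}c_k(z\partial_z)^kz$ of $l_z$ has $c_0=1$. *)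

theory Defs
  imports "HOL-Analysis.Analysis"
begin

text \<open>Half-integer mode indices k in Z+1/2 are encoded by integers n with k = n + 1/2.
  So psi n stands for the fermion psi_{n+1/2}, psistar n for psi^*_{n+1/2}.
  In particular psi_{-1/2} = psi (-1) and psi^*_{1/2} = psistar 0.\<close>

text \<open>A basis bra is indexed by a finite set D of integers: it is
  the bra vac . X_{d1} ... X_{dr} (d1 < ... < dr the elements of D), where
  X_n = psi^*_{n+1/2} if n \<ge> 0 and X_n = psi_{n+1/2} if n < 0.
  A bra is a coefficient function on such sets.  The operators act from the right;
  for a bra f and operators A, B, the bra f.(A B) is (f.A).B .\<close>

type_synonym bra = "int set \<Rightarrow> complex"

definition vac :: bra where
  "vac = (\<lambda>D. if D = {} then 1 else 0)"

definition bsign :: "int set \<Rightarrow> int \<Rightarrow> complex" where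
  "bsign D n = (-1) ^ card {d \<in> D. n < d}"

text \<open>right multiplication by the creation-type operator X_n\<close>
definition braX :: "int \<Rightarrow> bra \<Rightarrow> bra" where
  "braX n f = (\<lambda>E. if n \<in> E then bsign E n * f (E - {n}) else 0)"

text \<open>right multiplication by the partner (annihilation-type) operator of X_n\<close>
definition braY :: "int \<Rightarrow> bra \<Rightarrow> bra" where
  "braY n f = (\<lambda>E. if n \<notin> E then bsign E n * f (insert n E) else 0)"

definition psi :: "int \<Rightarrow> bra \<Rightarrow> bra" where
  "psi n f = (if n < 0 then braX n f else braY n f)"

definition psistar :: "int \<Rightarrow> bra \<Rightarrow> bra" where
  "psistar n f = (if 0 \<le> n then braX n f else braY n f)"

definition vev :: "bra \<Rightarrow> complex" where
  "vev b = b {}"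

text \<open>f . :psi^*_{p+1/2} psi_{n+1/2}: , with :ab: = ab - <0|ab|0>\<close>
definition normal_pair :: "int \<Rightarrow> int \<Rightarrow> bra \<Rightarrow> bra" where
  "normal_pair p n f = (\<lambda>E. psi n (psistar p f) E - vev (psi n (psistar p vac)) * f E)"

text \<open>An element a of w_{1+infinity} is the finite sum  sum a(i,j) z^i d_z^j
  (i :: int, j :: nat); it is given by its finitely supported coefficient function.\<close>

definition w1inf :: "(int \<times> nat \<Rightarrow> complex) set" where
  "w1inf = {a. finite {ij. a ij \<noteq> 0}}"

definition ffact :: "nat \<Rightarrow> int \<Rightarrow> complex" where
  "ffact j x = (\<Prod>t<j. of_int x - of_nat t)"

text \<open>A series g :: int => complex stands for sum_n g n z^n (integer powers).
  Since z^i d^j z^n = ffact j n z^(n+i-j), the action is:\<close>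
definition diffop_act :: "(int \<times> nat \<Rightarrow> complex) \<Rightarrow> (int \<Rightarrow> complex) \<Rightarrow> (int \<Rightarrow> complex)" where
  "diffop_act a g = (\<lambda>m. \<Sum>ij\<in>{ij. a ij \<noteq> 0}.
      a ij * ffact (snd ij) (m + int (snd ij) - fst ij) * g (m + int (snd ij) - fst ij))"

definition monomial :: "int \<Rightarrow> int \<Rightarrow> complex" where
  "monomial n = (\<lambda>m. if m = n then 1 else 0)"

definition deg_part :: "(int \<times> nat \<Rightarrow> complex) \<Rightarrow> int \<Rightarrow> (int \<times> nat \<Rightarrow> complex)" where
  "deg_part a d = (\<lambda>ij. if fst ij - int (snd ij) = d then a ij else 0)"

text \<open>With psi(z) = sum_n z^n psi_{n+1/2}, psi^*(z) = sum_p z^(-p-1) psi^*_{p+1/2}, one has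
  Res_z :psi^*(z) (a.psi(z)): = sum_{n,p} [z^p](a z^n) :psi^*_{p+1/2} psi_{n+1/2}: .
  Its right action on a bra is defined coefficientwise (for each basis bra only finitely
  many terms are nonzero when the bra is the vacuum).\<close>
definition hat :: "(int \<times> nat \<Rightarrow> complex) \<Rightarrow> bra \<Rightarrow> bra" where
  "hat a f = (\<lambda>E. \<Sum>\<^sub>\<infinity>pn\<in>UNIV. diffop_act a (monomial (snd pn)) (fst pn)
                                  * normal_pair (fst pn) (snd pn) f E)"

text \<open>An element of z^(1/2) C[z,z^-1]] is encoded by h :: int => complex, h n being the
  coefficient of z^(n+1/2).  Under this encoding z^(1/2) l z^(-1/2) acts as diffop_act l.
  An admissible basis: phi_k = z^(k+1/2) + sum_(i \<ge> 1-k) a_(k,i) z^(-i+1/2).\<close>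
definition admissible_basis :: "(nat \<Rightarrow> int \<Rightarrow> complex) \<Rightarrow> bool" where
  "admissible_basis \<phi> \<longleftrightarrow> (\<forall>k. \<phi> k (int k) = 1 \<and> (\<forall>n. int k < n \<longrightarrow> \<phi> k n = 0))"

text \<open>l is a lifting operator for the big-cell point |V> = c phi_0 /\ phi_1 /\ ...
  with admissible basis phi.  The degree-one condition says: the degree-one part of l
  equals sum_k c_k (z d_z)^k z (as operators, i.e. on every series) with c_0 = 1;
  note ((z d_z)^k z) z^n = (n+1)^k z^(n+1).\<close>
definition lifting_operator :: "(int \<times> nat \<Rightarrow> complex) \<Rightarrow> (nat \<Rightarrow> int \<Rightarrow> complex) \<Rightarrow> bool" where
  "lifting_operator l \<phi> \<longleftrightarrow>
     l \<in> w1inf \<and>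
     (\<exists>a :: nat \<Rightarrow> complex. \<forall>k\<ge>1. a k \<noteq> 0 \<and>
         (diffop_act l ^^ k) (\<phi> 0) = (\<lambda>n. a k * \<phi> k n)) \<and>
     (\<exists>c :: nat \<Rightarrow> complex. finite {k. c k \<noteq> 0} \<and> c 0 = 1 \<and>
         (\<forall>g. diffop_act (deg_part l 1) g =
               (\<lambda>m. \<Sum>k\<in>{k. c k \<noteq> 0}. c k * of_int m ^ k * g (m - 1))))"

end

theory Submission
  imports Defs
begin

text \<open>On the vacuum bra, \<open>hat a\<close> only sees the matrix entries [z^p](a z^n) with n < 0 \<le> p
  (integer encoding of the modes), each contributing \<open>-[z^p](a z^n)\<close> times the bra
  indexed by {n, p}.  Split l into homogeneous parts; the part of degree d maps z^x to
  \<open>deg_coeff l d x\<close> z^(x+d).  Because l maps each \<phi>_k to a multiple of \<phi>_(k+1) and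
  \<phi>_k = z^k + lower terms, the top-degree part of l, if of degree D \<ge> 2, would have
  \<open>deg_coeff l D k = 0\<close> for all k \<ge> 0; being a combination of falling factorials, it then
  vanishes.  So l has degree \<le> 1, and the only surviving entry is
  [z^0](l z^(-1)) = \<open>deg_coeff l 1 (-1)\<close> = c_0 = 1.\<close>

definition degrees :: "(int \<times> nat \<Rightarrow> complex) \<Rightarrow> int set" where
  "degrees a = (\<lambda>ij. fst ij - int (snd ij)) ` {ij. a ij \<noteq> 0}"

definition deg_coeff :: "(int \<times> nat \<Rightarrow> complex) \<Rightarrow> int \<Rightarrow> int \<Rightarrow> complex" where
  "deg_coeff a d x = (\<Sum>j | a (d + int j, j) \<noteq> 0. a (d + int j, j) * ffact j x)"

lemma finite_degrees: "finite {ij. a ij \<noteq> 0} \<Longrightarrow> finite (degrees a)"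
  unfolding degrees_def by simp

lemma deg_coeff_eq_0: "d \<notin> degrees a \<Longrightarrow> deg_coeff a d x = 0"
  unfolding deg_coeff_def degrees_def by (force intro!: sum.neutral)

lemma deg_coeff_deg_part: "deg_coeff (deg_part a d) d = deg_coeff a d"
  unfolding deg_coeff_def deg_part_def by simp

lemma diffop_act_scale: "diffop_act a (\<lambda>n. c * g n) = (\<lambda>m. c * diffop_act a g m)"
  unfolding diffop_act_def by (auto simp: sum_distrib_left mult.left_commute)

lemma diffop_act_eq_sum_deg_coeff:
  assumes fin: "finite {ij. a ij \<noteq> 0}"
  shows "diffop_act a g m = (\<Sum>d\<in>degrees a. deg_coeff a d (m - d) * g (m - d))"
proof -
  let ?A = "{ij. a ij \<noteq> 0}"
  let ?deg = "\<lambda>ij::int \<times> nat. fst ij - int (snd ij)"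
  have "diffop_act a g m = (\<Sum>d\<in>degrees a. \<Sum>ij\<in>{ij \<in> ?A. ?deg ij = d}.
      a ij * ffact (snd ij) (m + int (snd ij) - fst ij) * g (m + int (snd ij) - fst ij))"
    unfolding diffop_act_def degrees_def by (rule sum.group[symmetric]) (use fin in auto)
  also have "\<dots> = (\<Sum>d\<in>degrees a. deg_coeff a d (m - d) * g (m - d))"
  proof (rule sum.cong[OF refl])
    fix d
    have fiber: "{ij \<in> ?A. ?deg ij = d} = (\<lambda>j. (d + int j, j)) ` {j. a (d + int j, j) \<noteq> 0}"
      by force
    have "inj (\<lambda>j. (d + int j, j))"
      by (rule injI) simp
    then show "(\<Sum>ij\<in>{ij \<in> ?A. ?deg ij = d}.
        a ij * ffact (snd ij) (m + int (snd ij) - fst ij) * g (m + int (snd ij) - fst ij))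
      = deg_coeff a d (m - d) * g (m - d)"
      unfolding fiber deg_coeff_def
      by (simp add: sum.reindex inj_on_def sum_distrib_left algebra_simps)
  qed
  finally show ?thesis .
qed

lemma diffop_act_monomial:
  assumes "finite {ij. a ij \<noteq> 0}"
  shows "diffop_act a (monomial n) p = deg_coeff a (p - n) n"
proof -
  have "diffop_act a (monomial n) p
      = (\<Sum>d\<in>degrees a. if d = p - n then deg_coeff a (p - n) n else 0)"
    unfolding diffop_act_eq_sum_deg_coeff[OF assms] monomial_def
    by (rule sum.cong) auto
  then show ?thesis
    using assms by (simp add: finite_degrees deg_coeff_eq_0)
qed

lemma diffop_act_top_degree:
  assumes fin: "finite {ij. a ij \<noteq> 0}"
    and le: "\<And>d. d \<in> degrees a \<Longrightarrow> d \<le> D"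
    and g: "\<And>n. k < n \<Longrightarrow> g n = 0"
  shows "diffop_act a g (k + D) = deg_coeff a D k * g k"
proof -
  have "diffop_act a g (k + D)
      = (\<Sum>d\<in>degrees a. if d = D then deg_coeff a D k * g k else 0)"
    unfolding diffop_act_eq_sum_deg_coeff[OF fin]
  proof (rule sum.cong[OF refl])
    fix d assume "d \<in> degrees a"
    with le have "d \<le> D" .
    then show "deg_coeff a d (k + D - d) * g (k + D - d)
        = (if d = D then deg_coeff a D k * g k else 0)"
      using g[of "k + D - d"] by auto
  qed
  then show ?thesis
    using fin by (simp add: finite_degrees deg_coeff_eq_0)
qed

lemma ffact_of_nat_less: "k < j \<Longrightarrow> ffact j (int k) = 0"
  unfolding ffact_def by (rule prod_zero) auto

lemma ffact_self_nonzero: "ffact j (int j) \<noteq> 0"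
  unfolding ffact_def by (auto simp: prod_zero_iff)

text \<open>Evaluating at k = j kills every falling factorial of higher order.\<close>
lemma ffact_combination_eq_0:
  assumes fin: "finite J"
    and zero: "\<And>k::nat. (\<Sum>j\<in>J. c j * ffact j (int k)) = 0"
  shows "j \<in> J \<Longrightarrow> c j = 0"
proof (induction j rule: less_induct)
  case (less j)
  have "(\<Sum>i\<in>J. c i * ffact i (int j)) = (\<Sum>i\<in>J. if i = j then c j * ffact j (int j) else 0)"
  proof (rule sum.cong[OF refl])
    fix i assume "i \<in> J"
    then show "c i * ffact i (int j) = (if i = j then c j * ffact j (int j) else 0)"
      using less.IH[of i] ffact_of_nat_less[of j i] by (cases i j rule: linorder_cases) auto
  qed
  with zero[of j] have "c j * ffact j (int j) = 0"
    using fin less.prems by simp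
  then show "c j = 0"
    using ffact_self_nonzero by simp
qed

lemma deg_part_eq_0_if_deg_coeff_vanishes:
  assumes fin: "finite {ij. a ij \<noteq> 0}"
    and zero: "\<And>k::nat. deg_coeff a d (int k) = 0"
  shows "a (d + int j, j) = 0"
proof -
  have "finite ((\<lambda>j. (d + int j, j)) -` {ij. a ij \<noteq> 0})"
    by (rule finite_vimageI[OF fin]) (auto intro: injI)
  then have "finite {j. a (d + int j, j) \<noteq> 0}"
    by (simp add: vimage_def)
  from ffact_combination_eq_0[OF this, of "\<lambda>j. a (d + int j, j)"] zero
  show ?thesis
    unfolding deg_coeff_def by blast
qed

lemma lifting_operator_finite: "lifting_operator l \<phi> \<Longrightarrow> finite {ij. l ij \<noteq> 0}"
  unfolding lifting_operator_def w1inf_def by blast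

lemma lifting_operator_step:
  assumes "lifting_operator l \<phi>"
  obtains c where "diffop_act l (\<phi> k) = (\<lambda>n. c * \<phi> (Suc k) n)"
proof -
  obtain a where a: "\<And>k. k \<ge> 1 \<Longrightarrow> a k \<noteq> 0 \<and> (diffop_act l ^^ k) (\<phi> 0) = (\<lambda>n. a k * \<phi> k n)"
    using assms unfolding lifting_operator_def by blast
  show ?thesis
  proof (cases "k = 0")
    case True
    then show ?thesis
      using a[of 1] that by auto
  next
    case False
    then have "a k \<noteq> 0" and ak: "(diffop_act l ^^ k) (\<phi> 0) = (\<lambda>n. a k * \<phi> k n)"
      using a by auto
    have "(\<lambda>n. a (Suc k) * \<phi> (Suc k) n) = diffop_act l ((diffop_act l ^^ k) (\<phi> 0))"
      using a[of "Suc k"] by simp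
    also have "\<dots> = (\<lambda>m. a k * diffop_act l (\<phi> k) m)"
      unfolding ak by (rule diffop_act_scale)
    finally have "diffop_act l (\<phi> k) = (\<lambda>n. (a (Suc k) / a k) * \<phi> (Suc k) n)"
      using \<open>a k \<noteq> 0\<close> by (auto simp: fun_eq_iff field_simps dest: fun_cong)
    then show ?thesis
      using that by blast
  qed
qed

lemma lifting_operator_degrees_le_1:
  assumes adm: "admissible_basis \<phi>" and lift: "lifting_operator l \<phi>"
    and d: "d \<in> degrees l"
  shows "d \<le> 1"
proof (rule ccontr)
  assume "\<not> d \<le> 1"
  have fin: "finite {ij. l ij \<noteq> 0}"
    using lift by (rule lifting_operator_finite)
  have fin_degrees: "finite (degrees l)"
    using fin by (rule finite_degrees)
  define D where "D = Max (degrees l)"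
  have D_in: "D \<in> degrees l"
    unfolding D_def using fin_degrees d by (auto intro: Max_in)
  have D_max: "\<And>d'. d' \<in> degrees l \<Longrightarrow> d' \<le> D"
    unfolding D_def using fin_degrees by simp
  with d \<open>\<not> d \<le> 1\<close> have "D \<ge> 2"
    by fastforce
  have "deg_coeff l D (int k) = 0" for k
  proof -
    obtain c where c: "diffop_act l (\<phi> k) = (\<lambda>n. c * \<phi> (Suc k) n)"
      using lifting_operator_step[OF lift] by blast
    have "deg_coeff l D (int k) = diffop_act l (\<phi> k) (int k + D)"
      using diffop_act_top_degree[OF fin D_max] adm by (simp add: admissible_basis_def)
    also have "\<dots> = 0"
      using c adm \<open>D \<ge> 2\<close> by (simp add: admissible_basis_def)
    finally show ?thesis .
  qed
  then have top_part_zero: "l (D + int j, j) = 0" for j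
    using deg_part_eq_0_if_deg_coeff_vanishes[OF fin] by blast
  from D_in obtain i j where "l (i, j) \<noteq> 0" "D = i - int j"
    unfolding degrees_def by auto
  with top_part_zero[of j] show False
    by simp
qed

lemma lifting_operator_deg_coeff_1:
  assumes lift: "lifting_operator l \<phi>"
  shows "deg_coeff l 1 (-1) = 1"
proof -
  obtain c :: "nat \<Rightarrow> complex" where c: "finite {k. c k \<noteq> 0}" "c 0 = 1"
    "\<And>g. diffop_act (deg_part l 1) g = (\<lambda>m. \<Sum>k\<in>{k. c k \<noteq> 0}. c k * of_int m ^ k * g (m - 1))"
    using lift unfolding lifting_operator_def by blast
  have "finite {ij. deg_part l 1 ij \<noteq> 0}"
    using lifting_operator_finite[OF lift] by (rule finite_subset[rotated]) (auto simp: deg_part_def)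
  then have "deg_coeff l 1 (-1) = diffop_act (deg_part l 1) (monomial (-1)) 0"
    by (simp add: diffop_act_monomial deg_coeff_deg_part)
  also have "\<dots> = (\<Sum>k\<in>{k. c k \<noteq> 0}. if k = 0 then c 0 else 0)"
    unfolding c(3) by (rule sum.cong) (auto simp: monomial_def)
  also have "\<dots> = 1"
    using c(1,2) by simp
  finally show ?thesis .
qed

lemma lifting_operator_monomial_coeff:
  assumes "admissible_basis \<phi>" and "lifting_operator l \<phi>"
    and np: "n < 0" "0 \<le> p"
  shows "diffop_act l (monomial n) p = (if n = -1 \<and> p = 0 then 1 else 0)"
proof (cases "n = -1 \<and> p = 0")
  case True
  then show ?thesis
    using assms(2) by (simp add: lifting_operator_finite diffop_act_monomial
        lifting_operator_deg_coeff_1)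
next
  case False
  with np have "p - n \<notin> degrees l"
    using lifting_operator_degrees_le_1[OF assms(1,2)] by fastforce
  then show ?thesis
    using False assms(2) by (simp add: lifting_operator_finite diffop_act_monomial deg_coeff_eq_0)
qed

lemma psistar_vac: "psistar p vac = (\<lambda>E. if 0 \<le> p \<and> E = {p} then 1 else 0)"
proof -
  have no_greater: "{d. d = p \<and> p < d} = {}"
    by auto
  show ?thesis
    by (auto simp: fun_eq_iff psistar_def braX_def braY_def vac_def bsign_def no_greater)
qed

lemma psi_psistar_vac:
  "psi n (psistar p vac) =
     (\<lambda>E. if n < 0 \<and> 0 \<le> p \<and> E = {n, p} then -1 else if 0 \<le> n \<and> n = p \<and> E = {} then 1 else 0)"
proof
  fix E :: "int set"
  show "psi n (psistar p vac) E =
    (if n < 0 \<and> 0 \<le> p \<and> E = {n, p} then -1 else if 0 \<le> n \<and> n = p \<and> E = {} then 1 else 0)"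
  proof (cases "n < 0")
    case True
    then have "(n \<in> E \<and> 0 \<le> p \<and> E - {n} = {p}) = (0 \<le> p \<and> E = {n, p})"
      by auto
    moreover have "{d \<in> {n, p}. n < d} = {p}" if "0 \<le> p"
      using True that by auto
    ultimately show ?thesis
      using True unfolding psistar_vac psi_def braX_def bsign_def by auto
  next
    case False
    then show ?thesis
      unfolding psistar_vac psi_def braY_def bsign_def by auto
  qed
qed

lemma normal_pair_vac:
  "normal_pair p n vac E = (if n < 0 \<and> 0 \<le> p \<and> E = {n, p} then -1 else 0)"
  unfolding normal_pair_def psi_psistar_vac vev_def by (auto simp: vac_def)

lemma hat_vac_doubleton:
  assumes "n < 0" "0 \<le> p"
  shows "hat a vac {n, p} = - diffop_act a (monomial n) p"
proof -
  have "diffop_act a (monomial (snd qm)) (fst qm) * normal_pair (fst qm) (snd qm) vac {n, p}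
      = (if qm = (p, n) then - diffop_act a (monomial n) p else 0)" for qm :: "int \<times> int"
    using assms by (cases qm) (auto simp: normal_pair_vac doubleton_eq_iff)
  then have "hat a vac {n, p}
      = (\<Sum>\<^sub>\<infinity>qm\<in>UNIV. if qm = (p, n) then - diffop_act a (monomial n) p else 0)"
    unfolding hat_def by simp
  also have "\<dots> = (\<Sum>\<^sub>\<infinity>qm\<in>{(p, n)}. if qm = (p, n) then - diffop_act a (monomial n) p else 0)"
    by (rule infsum_cong_neutral) auto
  finally show ?thesis
    by simp
qed

lemma hat_vac_eq_0:
  assumes "\<nexists>n p. n < 0 \<and> 0 \<le> p \<and> E = {n, p}"
  shows "hat a vac E = 0"
proof -
  have "normal_pair q m vac E = 0" for q m
    using assms by (auto simp: normal_pair_vac)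
  then show ?thesis
    unfolding hat_def by simp
qed

theorem lemma4p3:
  fixes l :: "int \<times> nat \<Rightarrow> complex" and \<phi> :: "nat \<Rightarrow> int \<Rightarrow> complex"
  assumes "admissible_basis \<phi>"
    and "lifting_operator l \<phi>"
  shows "hat l vac = psi (-1) (psistar 0 vac)"
proof
  fix E :: "int set"
  show "hat l vac E = psi (-1) (psistar 0 vac) E"
  proof (cases "\<exists>n p. n < 0 \<and> 0 \<le> p \<and> E = {n, p}")
    case True
    then obtain n p where np: "n < 0" "0 \<le> p" and E: "E = {n, p}"
      by blast
    have "hat l vac E = (if n = -1 \<and> p = 0 then -1 else 0)"
      unfolding E hat_vac_doubleton[OF np] lifting_operator_monomial_coeff[OF assms np]
      by simp
    then show ?thesis
      using np by (auto simp: E psi_psistar_vac doubleton_eq_iff)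
  next
    case False
    then show ?thesis
      by (auto simp: hat_vac_eq_0 psi_psistar_vac)
  qed
qed

end
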